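(* Let $k\in\{0,1,\dots,\alpha\}$ and $j\in\{1,\dots,2^{\alpha-k}\}$, and let $m$ be a positive integer. Define $R_{k,j}(s)=\max\{r(s,i): (j-1)2^k<i\le j2^k\}$. Then there exist a positive integer $D$ and a residual network $f(\cdot,\tilde\theta^{(k)}_j)$ of size $(d,6^km,D,k+1)$ such that $$\mathbb E_{s\sim\mathcal D}\big(f(s,\tilde\theta^{(k)}_j)-R_{k,j}(s)\big)^2\le 5^k\,\frac{16\sum_{i=(j-1)2^k+1}^{j2^k}\|r(\cdot,i)\|_{\mathcal B}^2}{m}$$ and $\|\tilde\theta^{(k)}_j\|_{\mathcal P}\le (7/2)^k\sum_{i=(j-1)2^k+1}^{j2^k}12\|r(\cdot,i)\|_{\mathcal B}$.
   Context: Residual networks: for positive integers $d,m,D,L$, a residual network of size $(d,m,D,L)$ is a function $f(\cdot,\theta):\mathbb R^d\to\mathbb R$, $f(x,\theta)=u^{\top}h^{[L]}$, where $h^{[0]}=Vx$ and $h^{[l]}=h^{[l-1]}+U^{[l]}\sigma(W^{[l]}h^{[l-1]})$ for $l=1,\dots,L$, with $V\in\mathbb R^{D\times d}$, $W^{[l]}\in\mathbb R^{m\times D}$, $U^{[l]}\in\mathbb R^{D\times m}$, $u\in\mathbb R^D$, $\sigma(z)=\max(z,0)$ applied entrywise, and $\theta=(u,V,\{W^{[l]}\}_{l=1}^L,\{U^{[l]}\}_{l=1}^L)$. Its weighted path norm is $\|\theta\|_{\mathcal P}=\big\||u|^{\top}(I+3|U^{[L]}||W^{[L]}|)\cdots(I+3|U^{[1]}||W^{[1]}|)|V|\big\|_1$,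 where $|\cdot|$ of a matrix/vector is entrywise absolute value and $I$ is the $D\times D$ identity. Barron space: for a compact $S\subset\mathbb R^d$, $h:S\to\mathbb R$ is in the Barron space $\mathcal B(S)$ if there is a probability measure $\rho$ on $\mathbb R\times\mathbb R^d$ with $h(x)=\mathbb E_{(u,w)\sim\rho}[u\,\sigma(w^{\top}x)]$ for all $x\in S$; its Barron norm is $\|h\|_{\mathcal B}=\inf_\rho(\mathbb E_{\rho}[u^2\|w\|_1^2])^{1/2}$, the infimum over all such $\rho$. Setting: $S\subseteq[0,1]^d$ is compact with positive Lebesgue measure and $\mathcal D$ is the uniform distribution on $S$; $A=\{1,\dots,2^{\alpha}\}$ with $\alpha\ge0$ an integer; $r:S\times A\to\mathbb R$ with each $r(\cdot,a)$ continuous, in $\mathcal B(S)$, and $|r(s,a)|\le1$. *)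

theory Defs
  imports "HOL-Probability.Probability"
begin

definition relu :: "real \<Rightarrow> real" where
  "relu z = max z 0"

text \<open>Points of R^d are
  vectors of type real^'d (d = CARD('d)); hidden vectors of dimension D and matrices with
  hidden/width dimensions are functions on nat, only entries with indices below D resp. m
  are used.  u i : i<D;  V i j : i<D, j::'d;  W l q p : q<m, p<D;  U l i q : i<D, q<m.\<close>
record 'd resnet_params =
  pu :: "nat \<Rightarrow> real"
  pV :: "nat \<Rightarrow> 'd \<Rightarrow> real"
  pW :: "nat \<Rightarrow> nat \<Rightarrow> nat \<Rightarrow> real"
  pU :: "nat \<Rightarrow> nat \<Rightarrow> nat \<Rightarrow> real"

primrec resnet_hidden ::
  "nat \<Rightarrow> nat \<Rightarrow> ('d::finite) resnet_params \<Rightarrow> real^'d \<Rightarrow> nat \<Rightarrow> nat \<Rightarrow> real" where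
  "resnet_hidden m D \<theta> x 0 = (\<lambda>i. \<Sum>j\<in>UNIV. pV \<theta> i j * x $ j)"
| "resnet_hidden m D \<theta> x (Suc l) =
     (\<lambda>i. resnet_hidden m D \<theta> x l i +
          (\<Sum>q<m. pU \<theta> (Suc l) i q *
              relu (\<Sum>p<D. pW \<theta> (Suc l) q p * resnet_hidden m D \<theta> x l p)))"

text \<open>Residual network of size (CARD('d), m, D, L).\<close>
definition resnet ::
  "nat \<Rightarrow> nat \<Rightarrow> nat \<Rightarrow> ('d::finite) resnet_params \<Rightarrow> real^'d \<Rightarrow> real" where
  "resnet m D L \<theta> x = (\<Sum>i<D. pu \<theta> i * resnet_hidden m D \<theta> x L i)"

primrec path_mat ::
  "nat \<Rightarrow> nat \<Rightarrow> ('d::finite) resnet_params \<Rightarrow> nat \<Rightarrow> nat \<Rightarrow> 'd \<Rightarrow> real" where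
  "path_mat m D \<theta> 0 = (\<lambda>i j. \<bar>pV \<theta> i j\<bar>)"
| "path_mat m D \<theta> (Suc l) =
     (\<lambda>i j. path_mat m D \<theta> l i j +
        3 * (\<Sum>q<m. \<bar>pU \<theta> (Suc l) i q\<bar> *
               (\<Sum>p<D. \<bar>pW \<theta> (Suc l) q p\<bar> * path_mat m D \<theta> l p j)))"

definition path_norm ::
  "nat \<Rightarrow> nat \<Rightarrow> nat \<Rightarrow> ('d::finite) resnet_params \<Rightarrow> real" where
  "path_norm m D L \<theta> = (\<Sum>j\<in>UNIV. \<bar>\<Sum>i<D. \<bar>pu \<theta> i\<bar> * path_mat m D \<theta> L i j\<bar>)"

definition l1norm :: "real^'d::finite \<Rightarrow> real" where
  "l1norm w = (\<Sum>j\<in>UNIV. \<bar>w $ j\<bar>)"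

definition barron_rep :: "(real^'d::finite) set \<Rightarrow> (real^'d \<Rightarrow> real) \<Rightarrow> (real \<times> (real^'d)) measure \<Rightarrow> bool" where
  "barron_rep S h \<rho> \<longleftrightarrow> prob_space \<rho> \<and> sets \<rho> = sets borel \<and>
     (\<forall>x\<in>S. integrable \<rho> (\<lambda>(u,w). u * relu (w \<bullet> x)) \<and>
             h x = (\<integral>(u,w). u * relu (w \<bullet> x) \<partial>\<rho>))"

definition barron_moments :: "(real^'d::finite) set \<Rightarrow> (real^'d \<Rightarrow> real) \<Rightarrow> real set" where
  "barron_moments S h = {(\<integral>(u,w). u\<^sup>2 * (l1norm w)\<^sup>2 \<partial>\<rho>) | \<rho>.
      barron_rep S h \<rho> \<and> integrable \<rho> (\<lambda>(u,w). u\<^sup>2 * (l1norm w)\<^sup>2)}"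

definition barron_space :: "(real^'d::finite) set \<Rightarrow> (real^'d \<Rightarrow> real) \<Rightarrow> bool" where
  "barron_space S h \<longleftrightarrow> barron_moments S h \<noteq> {}"

definition barron_norm :: "(real^'d::finite) set \<Rightarrow> (real^'d \<Rightarrow> real) \<Rightarrow> real" where
  "barron_norm S h = sqrt (Inf (barron_moments S h))"

definition unif_expect :: "(real^'d::finite) set \<Rightarrow> (real^'d \<Rightarrow> real) \<Rightarrow> real" where
  "unif_expect S g = (LINT s:S|lborel. g s) / measure lborel S"

end

theory Submission
  imports Defs
begin

text \<open>Each reward \<open>r(\<cdot>, i)\<close> is approximated by a one-hidden-layer network of width \<open>m\<close>
  whose neurons are chosen greedily: because a Barron function is an average of single ReLU
  neurons, for every partial sum some neuron performs at least as well as the average one, and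
  adding \<open>m\<close> such neurons gives mean squared error \<open>2 E[u\<^sup>2 \<parallel>w\<parallel>\<^sub>1\<^sup>2] / m\<close> with path norm at most
  \<open>6 (E[u\<^sup>2 \<parallel>w\<parallel>\<^sub>1\<^sup>2])\<^sup>1\<^sup>/\<^sup>2\<close>.  The maximum over a dyadic block of \<open>2\<^sup>k\<close> rewards is then
  computed exactly by a binary tree of residual layers, using
  \<open>max a b = (a + b)/2 + relu (a - b)/2 + relu (b - a)/2\<close>: every level doubles the width, adds
  one layer and multiplies the path norm by \<open>7/2\<close>.  Since
  \<open>(max\<^sub>i a\<^sub>i - max\<^sub>i b\<^sub>i)\<^sup>2 \<le> \<Sum>\<^sub>i (a\<^sub>i - b\<^sub>i)\<^sup>2\<close>, the leaf errors simply add up.\<close>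

section \<open>Finite maxima, set integrals and expectations\<close>

lemma sum_lessThan_double:
  fixes G :: "nat \<Rightarrow> 'a::comm_monoid_add"
  shows "(\<Sum>q<2*w. G q) = (\<Sum>q<w. G q) + (\<Sum>q<w. G (q+w))"
proof -
  have "(\<Sum>q<2*w. G q) = (\<Sum>q\<in>{0..<w}. G q) + (\<Sum>q\<in>{w..<w+w}. G q)"
    using sum.atLeastLessThan_concat[of 0 w "w+w" G] by (simp add: atLeast0LessThan mult_2)
  also have "(\<Sum>q\<in>{w..<w+w}. G q) = (\<Sum>q<w. G (q+w))"
    using sum.shift_bounds_nat_ivl[of G 0 w w] by (simp add: atLeast0LessThan)
  finally show ?thesis by (simp add: atLeast0LessThan)
qed

lemma sum_lessThan_two_blocks:
  fixes F :: "nat \<Rightarrow> 'a::comm_monoid_add"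
  shows "(\<Sum>p<Suc (Suc (2*D)). F p) = (\<Sum>p<D. F p) + (\<Sum>p<D. F (p+D)) + F (2*D) + F (Suc (2*D))"
  by (simp add: sum_lessThan_double add.assoc)

lemma greaterThanAtMost_split_power2:
  "{(b::nat)<..b + 2^Suc k} = {b<..b + 2^k} \<union> {b + 2^k<..(b + 2^k) + 2^k}"
  by auto

lemma dyadic_block_le:
  assumes "k \<le> \<alpha>" "j \<in> {1..2^(\<alpha> - k)}"
  shows "j * 2^k = (j - 1) * 2^k + 2^k" and "j * 2^k \<le> (2::nat)^\<alpha>"
proof -
  show "j * 2^k = (j - 1) * 2^k + 2^k" using assms(2) by (cases j) auto
  have "j * 2^k \<le> 2^(\<alpha> - k) * 2^k" using assms(2) by simp
  also have "\<dots> = 2^\<alpha>" using assms(1) by (simp flip: power_add)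
  finally show "j * 2^k \<le> (2::nat)^\<alpha>" .
qed

lemma continuous_on_Max_image:
  fixes f :: "'i \<Rightarrow> 'a::topological_space \<Rightarrow> 'b::linorder_topology"
  assumes "finite I" "I \<noteq> {}" "\<And>i. i \<in> I \<Longrightarrow> continuous_on S (f i)"
  shows "continuous_on S (\<lambda>x. Max ((\<lambda>i. f i x) ` I))"
  using assms
proof (induction I rule: finite_ne_induct)
  case (insert i I)
  then show ?case by (simp add: continuous_on_max)
qed simp

lemma Max_image_diff_sq_le:
  fixes a b :: "'i \<Rightarrow> real"
  assumes fin: "finite I" and ne: "I \<noteq> {}"
  shows "(Max (a ` I) - Max (b ` I))\<^sup>2 \<le> (\<Sum>i\<in>I. (a i - b i)\<^sup>2)"
proof -
  have single: "(a i - b i)\<^sup>2 \<le> (\<Sum>i\<in>I. (a i - b i)\<^sup>2)" if "i \<in> I" for i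
    by (rule member_le_sum[OF that]) (simp_all add: fin)
  have "\<exists>i\<in>I. \<bar>Max (a ` I) - Max (b ` I)\<bar> \<le> \<bar>a i - b i\<bar>"
  proof (cases "Max (b ` I) \<le> Max (a ` I)")
    case True
    have "Max (a ` I) \<in> a ` I" using fin ne by simp
    then obtain i where "i \<in> I" "a i = Max (a ` I)" by (metis imageE)
    moreover have "b i \<le> Max (b ` I)" using fin \<open>i \<in> I\<close> by simp
    ultimately show ?thesis using True by force
  next
    case False
    have "Max (b ` I) \<in> b ` I" using fin ne by simp
    then obtain i where "i \<in> I" "b i = Max (b ` I)" by (metis imageE)
    moreover have "a i \<le> Max (a ` I)" using fin \<open>i \<in> I\<close> by simp
    ultimately show ?thesis using False by force
  qed
  then obtain i where "i \<in> I" "\<bar>Max (a ` I) - Max (b ` I)\<bar> \<le> \<bar>a i - b i\<bar>" ..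
  then have "(Max (a ` I) - Max (b ` I))\<^sup>2 \<le> (a i - b i)\<^sup>2"
    by (simp add: abs_le_square_iff)
  with single[OF \<open>i \<in> I\<close>] show ?thesis by linarith
qed

lemma set_integrable_continuous_on_compact:
  "compact S \<Longrightarrow> continuous_on S f \<Longrightarrow> set_integrable lborel S (f :: _ \<Rightarrow> real)"
  unfolding set_integrable_def by (rule borel_integrable_compact)

lemma set_integral_nonneg:
  fixes f :: "_ \<Rightarrow> real"
  shows "(\<And>x. x \<in> S \<Longrightarrow> 0 \<le> f x) \<Longrightarrow> 0 \<le> (LINT x:S|M. f x)"
  unfolding set_lebesgue_integral_def by (rule integral_nonneg_AE) (auto simp: indicator_def)

lemma set_integral_sum:
  fixes f :: "'i \<Rightarrow> _ \<Rightarrow> real"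
  assumes "\<And>i. i \<in> I \<Longrightarrow> set_integrable M S (f i)"
  shows "(LINT x:S|M. \<Sum>i\<in>I. f i x) = (\<Sum>i\<in>I. LINT x:S|M. f i x)"
  using Bochner_Integration.integral_sum[where f="\<lambda>i x. indicator S x *\<^sub>R f i x"] assms
  unfolding set_lebesgue_integral_def set_integrable_def by (simp add: sum_distrib_left)

lemma borel_measurable_continuous_on_pair:
  fixes f :: "'a::second_countable_topology \<times> 'b::second_countable_topology \<Rightarrow> real"
  assumes "sets M = sets borel" "sets N = sets borel" "continuous_on UNIV f"
  shows "f \<in> borel_measurable (M \<Otimes>\<^sub>M N)"
proof -
  have "sets (M \<Otimes>\<^sub>M N) = sets (borel \<Otimes>\<^sub>M borel :: ('a \<times> 'b) measure)"
    using assms by (intro sets_pair_measure_cong) auto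
  then show ?thesis
    using borel_measurable_continuous_onI[OF assms(3)] measurable_cong_sets
    unfolding borel_prod by blast
qed

lemma (in prob_space) exists_le_expectation:
  fixes f :: "'a \<Rightarrow> real"
  assumes "integrable M f"
  shows "\<exists>x\<in>space M. f x \<le> expectation f"
proof (rule ccontr)
  assume "\<not> ?thesis"
  then have "AE x in M. expectation f < f x" by (auto simp: not_le)
  then have "expectation (\<lambda>_. expectation f) < expectation f"
    by (intro integral_less_AE_space) (use assms in \<open>auto simp: emeasure_space_1\<close>)
  then show False by (simp add: prob_space)
qed

section \<open>Residual networks\<close>

lemma relu_nonneg: "0 \<le> relu z"
  by (simp add: relu_def)

lemma continuous_on_relu [continuous_intros]:
  "continuous_on A f \<Longrightarrow> continuous_on A (\<lambda>x. relu (f x))"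
  unfolding relu_def by (intro continuous_intros)

lemma max_eq_relu: "max a b = (a + b) / 2 + relu (a - b) / 2 + relu (b - a) / 2"
  by (auto simp: relu_def max_def field_simps)

definition units_idle_from :: "nat \<Rightarrow> ('d::finite) resnet_params \<Rightarrow> bool" where
  "units_idle_from w \<theta> \<longleftrightarrow> (\<forall>l i q. w \<le> q \<longrightarrow> pU \<theta> l i q = 0)"

lemma resnet_hidden_widen:
  assumes "units_idle_from w \<theta>" "w \<le> w'"
  shows "resnet_hidden w' D \<theta> x l = resnet_hidden w D \<theta> x l"
proof (induction l)
  case (Suc l)
  have "(\<Sum>q<w'. pU \<theta> (Suc l) i q * relu (\<Sum>p<D. pW \<theta> (Suc l) q p * resnet_hidden w D \<theta> x l p))
    = (\<Sum>q<w. pU \<theta> (Suc l) i q * relu (\<Sum>p<D. pW \<theta> (Suc l) q p * resnet_hidden w D \<theta> x l p))"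
    for i
    by (rule sum.mono_neutral_right) (use assms in \<open>auto simp: units_idle_from_def\<close>)
  then show ?case using Suc by simp
qed simp

lemma path_mat_widen:
  assumes "units_idle_from w \<theta>" "w \<le> w'"
  shows "path_mat w' D \<theta> l = path_mat w D \<theta> l"
proof (induction l)
  case (Suc l)
  have "(\<Sum>q<w'. \<bar>pU \<theta> (Suc l) i q\<bar> * (\<Sum>p<D. \<bar>pW \<theta> (Suc l) q p\<bar> * path_mat w D \<theta> l p j))
    = (\<Sum>q<w. \<bar>pU \<theta> (Suc l) i q\<bar> * (\<Sum>p<D. \<bar>pW \<theta> (Suc l) q p\<bar> * path_mat w D \<theta> l p j))"
    for i j
    by (rule sum.mono_neutral_right) (use assms in \<open>auto simp: units_idle_from_def\<close>)
  then show ?case using Suc by (simp only: path_mat.simps)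
qed simp

lemma resnet_widen:
  "units_idle_from w \<theta> \<Longrightarrow> w \<le> w' \<Longrightarrow> resnet w' D L \<theta> x = resnet w D L \<theta> x"
  unfolding resnet_def by (subst resnet_hidden_widen[of w \<theta> w']) auto

lemma path_norm_widen:
  "units_idle_from w \<theta> \<Longrightarrow> w \<le> w' \<Longrightarrow> path_norm w' D L \<theta> = path_norm w D L \<theta>"
  unfolding path_norm_def by (subst path_mat_widen[of w \<theta> w']) auto

lemma path_mat_nonneg: "0 \<le> path_mat w D \<theta> l i j"
  by (induction l arbitrary: i) (auto intro!: add_nonneg_nonneg sum_nonneg mult_nonneg_nonneg)

lemma continuous_on_resnet_hidden: "continuous_on A (\<lambda>x. resnet_hidden m D \<theta> x l i)"
proof (induction l arbitrary: i)
  case 0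
  show ?case by (simp, intro continuous_intros)
next
  case (Suc l)
  show ?case by (simp only: resnet_hidden.simps, intro continuous_intros Suc)
qed

lemma continuous_on_resnet: "continuous_on A (resnet m D L \<theta>)"
  unfolding resnet_def by (intro continuous_intros continuous_on_resnet_hidden)

text \<open>Hidden coordinates \<open>q < m\<close> hold \<open>w q \<bullet> x\<close>; the single layer adds
  \<open>\<Sum>\<^sub>q c q * relu (w q \<bullet> x)\<close> to coordinate \<open>m\<close>, which is the output.\<close>
definition shallow_params ::
  "nat \<Rightarrow> (nat \<Rightarrow> real) \<Rightarrow> (nat \<Rightarrow> real^'d) \<Rightarrow> ('d::finite) resnet_params" where
  "shallow_params m c w = \<lparr> pu = (\<lambda>i. if i = m then 1 else 0),
     pV = (\<lambda>i j. if i < m then w i $ j else 0),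
     pW = (\<lambda>l q p. if q = p then 1 else 0),
     pU = (\<lambda>l i q. if i = m \<and> q < m then c q else 0) \<rparr>"

lemma units_idle_from_shallow_params: "units_idle_from m (shallow_params m c w)"
  by (simp add: units_idle_from_def shallow_params_def)

lemma resnet_shallow_params:
  "resnet m (Suc m) (Suc 0) (shallow_params m c w) x = (\<Sum>q<m. c q * relu (w q \<bullet> x))"
  unfolding resnet_def by (simp add: shallow_params_def mult_if_delta inner_vec_def mult.commute)

lemma path_norm_shallow_params:
  "path_norm m (Suc m) (Suc 0) (shallow_params m c w) = 3 * (\<Sum>q<m. \<bar>c q\<bar> * l1norm (w q))"
proof -
  let ?\<theta> = "shallow_params m c w"
  have "\<bar>pW ?\<theta> l q p\<bar> = pW ?\<theta> l q p" for l q p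
    by (simp add: shallow_params_def)
  then have "(\<Sum>i<Suc m. \<bar>pu ?\<theta> i\<bar> * path_mat m (Suc m) ?\<theta> (Suc 0) i j)
      = 3 * (\<Sum>q<m. \<bar>c q\<bar> * \<bar>w q $ j\<bar>)" for j
    by (simp add: shallow_params_def mult_if_delta)
  then have "path_norm m (Suc m) (Suc 0) ?\<theta> = (\<Sum>j\<in>UNIV. 3 * (\<Sum>q<m. \<bar>c q\<bar> * \<bar>w q $ j\<bar>))"
    unfolding path_norm_def by (simp add: sum_nonneg)
  also have "\<dots> = 3 * (\<Sum>q<m. \<bar>c q\<bar> * l1norm (w q))"
    by (simp add: l1norm_def sum_distrib_left sum.swap[of _ UNIV])
  finally show ?thesis .
qed

section \<open>The maximum of two networks\<close>

text \<open>Hidden coordinates \<open>[0, D)\<close> carry the state of \<open>a\<close> and \<open>[D, 2D)\<close> that of \<open>b\<close>, each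
  network using its own block of \<open>w\<close> units in the first \<open>L\<close> layers.  Layer \<open>L + 1\<close> writes
  \<open>relu (f\<^sub>a - f\<^sub>b)\<close> and \<open>relu (f\<^sub>b - f\<^sub>a)\<close> into the two extra coordinates, and the output
  weights realise \<open>max f\<^sub>a f\<^sub>b\<close> by \<open>max_eq_relu\<close>.\<close>
definition max_params ::
  "nat \<Rightarrow> nat \<Rightarrow> nat \<Rightarrow> ('d::finite) resnet_params \<Rightarrow> 'd resnet_params \<Rightarrow> 'd resnet_params" where
  "max_params L D w a b = \<lparr>
     pu = (\<lambda>i. if i < D then pu a i / 2 else if i < 2*D then pu b (i-D) / 2
              else if i < Suc (Suc (2*D)) then 1/2 else 0),
     pV = (\<lambda>i j. if i < D then pV a i j else if i < 2*D then pV b (i-D) j else 0),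
     pW = (\<lambda>l q p. if l = Suc L then
                (if q = 0 then (if p < D then pu a p else if p < 2*D then - pu b (p-D) else 0)
                 else if q = 1 then (if p < D then - pu a p else if p < 2*D then pu b (p-D) else 0)
                 else 0)
              else if q < w then (if p < D then pW a l q p else 0)
              else if q < 2*w then (if D \<le> p \<and> p < 2*D then pW b l (q-w) (p-D) else 0)
              else 0),
     pU = (\<lambda>l i q. if l = Suc L then
                (if i = 2*D \<and> q = 0 then 1 else if i = Suc (2*D) \<and> q = 1 then 1 else 0)
              else if i < D then (if q < w then pU a l i q else 0)
              else if i < 2*D then (if w \<le> q \<and> q < 2*w then pU b l (i-D) (q-w) else 0)
              else 0) \<rparr>"

lemma units_idle_from_max_params: "0 < w \<Longrightarrow> units_idle_from (2*w) (max_params L D w a b)"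
  by (auto simp: units_idle_from_def max_params_def)

lemma pu_max_params:
  "p < D \<Longrightarrow> pu (max_params L D w a b) p = pu a p / 2"
  "p < D \<Longrightarrow> pu (max_params L D w a b) (p+D) = pu b p / 2"
  "pu (max_params L D w a b) (2*D) = 1/2"
  "pu (max_params L D w a b) (Suc (2*D)) = 1/2"
  by (auto simp: max_params_def)

lemma pU_max_params_below:
  assumes "l \<noteq> Suc L" "q < w"
  shows "i < D \<Longrightarrow> pU (max_params L D w a b) l i q = pU a l i q"
    and "i < D \<Longrightarrow> pU (max_params L D w a b) l i (q+w) = 0"
    and "D \<le> i \<Longrightarrow> i < 2*D \<Longrightarrow> pU (max_params L D w a b) l i q = 0"
    and "D \<le> i \<Longrightarrow> i < 2*D \<Longrightarrow> pU (max_params L D w a b) l i (q+w) = pU b l (i-D) q"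
    and "2*D \<le> i \<Longrightarrow> pU (max_params L D w a b) l i q = 0"
    and "2*D \<le> i \<Longrightarrow> pU (max_params L D w a b) l i (q+w) = 0"
  using assms by (auto simp: max_params_def)

lemma pW_max_params_below:
  fixes H :: "nat \<Rightarrow> real"
  assumes "l \<noteq> Suc L" "q < w"
  shows "(\<Sum>p<Suc (Suc (2*D)). pW (max_params L D w a b) l q p * H p) = (\<Sum>p<D. pW a l q p * H p)"
    and "(\<Sum>p<Suc (Suc (2*D)). pW (max_params L D w a b) l (q+w) p * H p)
      = (\<Sum>p<D. pW b l q p * H (p+D))"
    and "(\<Sum>p<Suc (Suc (2*D)). \<bar>pW (max_params L D w a b) l q p\<bar> * H p) = (\<Sum>p<D. \<bar>pW a l q p\<bar> * H p)"
    and "(\<Sum>p<Suc (Suc (2*D)). \<bar>pW (max_params L D w a b) l (q+w) p\<bar> * H p)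
      = (\<Sum>p<D. \<bar>pW b l q p\<bar> * H (p+D))"
  using assms by (simp_all only: sum_lessThan_two_blocks) (simp_all add: max_params_def)

lemma pU_max_params_top:
  "pU (max_params L D w a b) (Suc L) i q
     = (if i = 2*D \<and> q = 0 then 1 else if i = Suc (2*D) \<and> q = 1 then 1 else 0)"
  by (simp add: max_params_def)

lemma pW_max_params_top:
  fixes H :: "nat \<Rightarrow> real"
  shows "(\<Sum>p<Suc (Suc (2*D)). pW (max_params L D w a b) (Suc L) 0 p * H p)
      = (\<Sum>p<D. pu a p * H p) - (\<Sum>p<D. pu b p * H (p+D))"
    and "(\<Sum>p<Suc (Suc (2*D)). pW (max_params L D w a b) (Suc L) 1 p * H p)
      = (\<Sum>p<D. pu b p * H (p+D)) - (\<Sum>p<D. pu a p * H p)"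
    and "q \<in> {0, 1} \<Longrightarrow> (\<Sum>p<Suc (Suc (2*D)). \<bar>pW (max_params L D w a b) (Suc L) q p\<bar> * H p)
      = (\<Sum>p<D. \<bar>pu a p\<bar> * H p) + (\<Sum>p<D. \<bar>pu b p\<bar> * H (p+D))"
  by (simp_all only: sum_lessThan_two_blocks) (auto simp: max_params_def sum_negf)

lemma sum_pU_max_params_top:
  fixes G :: "nat \<Rightarrow> real"
  assumes "0 < w" "g 0 = 0" "g 1 = 1"
  shows "(\<Sum>q<2*w. g (pU (max_params L D w a b) (Suc L) i q) * G q)
    = (if i = 2*D then G 0 else 0) + (if i = Suc (2*D) then G 1 else 0)"
proof -
  have "(\<Sum>q<2*w. g (pU (max_params L D w a b) (Suc L) i q) * G q)
      = (\<Sum>q<2*w. (if q = 0 \<and> i = 2*D then G 0 else 0) + (if q = 1 \<and> i = Suc (2*D) then G 1 else 0))"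
    using assms by (intro sum.cong) (auto simp: pU_max_params_top)
  then show ?thesis using assms by (simp add: sum.distrib)
qed

lemma resnet_hidden_max_params:
  assumes "l \<le> L"
  shows "resnet_hidden (2*w) (Suc (Suc (2*D))) (max_params L D w a b) x l i =
    (if i < D then resnet_hidden w D a x l i
     else if i < 2*D then resnet_hidden w D b x l (i-D) else 0)"
  using assms
proof (induction l arbitrary: i)
  case 0
  then show ?case by (simp add: max_params_def)
next
  case (Suc l)
  let ?c = "max_params L D w a b"
  let ?H = "resnet_hidden (2*w) (Suc (Suc (2*D))) ?c x l"
  let ?ha = "resnet_hidden w D a x l" and ?hb = "resnet_hidden w D b x l"
  have below: "Suc l \<noteq> Suc L" using Suc by simp
  have IH: "?H p = (if p < D then ?ha p else if p < 2*D then ?hb (p-D) else 0)" for p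
    using Suc by simp
  have pre: "(\<Sum>p<Suc (Suc (2*D)). pW ?c (Suc l) q p * ?H p) = (\<Sum>p<D. pW a (Suc l) q p * ?ha p)"
    "(\<Sum>p<Suc (Suc (2*D)). pW ?c (Suc l) (q+w) p * ?H p) = (\<Sum>p<D. pW b (Suc l) q p * ?hb p)"
    if "q < w" for q
    by (rule trans[OF pW_max_params_below(1)[OF below that]]
        trans[OF pW_max_params_below(2)[OF below that]];
        simp add: IH cong: sum.cong_simp del: resnet_hidden.simps)+
  have "resnet_hidden (2*w) (Suc (Suc (2*D))) ?c x (Suc l) i = ?H i
      + ((\<Sum>q<w. pU ?c (Suc l) i q * relu (\<Sum>p<D. pW a (Suc l) q p * ?ha p))
       + (\<Sum>q<w. pU ?c (Suc l) i (q+w) * relu (\<Sum>p<D. pW b (Suc l) q p * ?hb p)))"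
    by (simp only: resnet_hidden.simps sum_lessThan_double)
       (intro arg_cong2[where f="(+)"] refl sum.cong, simp_all only: lessThan_iff pre)
  also have "\<dots> = (if i < D then resnet_hidden w D a x (Suc l) i
      else if i < 2*D then resnet_hidden w D b x (Suc l) (i-D) else 0)"
    using below by (simp add: IH pU_max_params_below cong: sum.cong_simp)
  finally show ?case .
qed

lemma resnet_hidden_max_params_top:
  assumes w: "0 < w"
  shows "resnet_hidden (2*w) (Suc (Suc (2*D))) (max_params L D w a b) x (Suc L) i =
    (if i < D then resnet_hidden w D a x L i else if i < 2*D then resnet_hidden w D b x L (i-D)
     else if i = 2*D then relu (resnet w D L a x - resnet w D L b x)
     else if i = Suc (2*D) then relu (resnet w D L b x - resnet w D L a x) else 0)"
proof -
  let ?c = "max_params L D w a b"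
  let ?H = "resnet_hidden (2*w) (Suc (Suc (2*D))) ?c x L"
  have H: "?H p = (if p < D then resnet_hidden w D a x L p
      else if p < 2*D then resnet_hidden w D b x L (p-D) else 0)" for p
    by (rule resnet_hidden_max_params) simp
  have out: "(\<Sum>p<Suc (Suc (2*D)). pW ?c (Suc L) 0 p * ?H p) = resnet w D L a x - resnet w D L b x"
    "(\<Sum>p<Suc (Suc (2*D)). pW ?c (Suc L) 1 p * ?H p) = resnet w D L b x - resnet w D L a x"
    unfolding pW_max_params_top(1,2) resnet_def
    by (simp_all add: H cong: sum.cong_simp del: resnet_hidden.simps)
  show ?thesis
    by (simp only: resnet_hidden.simps(2) sum_pU_max_params_top[OF w, where g="\<lambda>z. z"] out)
       (simp add: H del: resnet_hidden.simps)
qed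

lemma resnet_max_params:
  assumes w: "0 < w"
  shows "resnet (2*w) (Suc (Suc (2*D))) (Suc L) (max_params L D w a b) x
    = max (resnet w D L a x) (resnet w D L b x)"
  unfolding resnet_def[of "2*w"] sum_lessThan_two_blocks max_eq_relu
  by (simp add: pu_max_params resnet_hidden_max_params_top[OF w] resnet_def
      cong: sum.cong_simp del: resnet_hidden.simps flip: sum_divide_distrib)

lemma path_mat_max_params:
  assumes "l \<le> L"
  shows "path_mat (2*w) (Suc (Suc (2*D))) (max_params L D w a b) l i j =
    (if i < D then path_mat w D a l i j else if i < 2*D then path_mat w D b l (i-D) j else 0)"
  using assms
proof (induction l arbitrary: i)
  case 0
  then show ?case by (simp add: max_params_def)
next
  case (Suc l)
  let ?c = "max_params L D w a b"
  let ?H = "\<lambda>p. path_mat (2*w) (Suc (Suc (2*D))) ?c l p j"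
  let ?Pa = "\<lambda>p. path_mat w D a l p j" and ?Pb = "\<lambda>p. path_mat w D b l p j"
  have below: "Suc l \<noteq> Suc L" using Suc by simp
  have IH: "?H p = (if p < D then ?Pa p else if p < 2*D then ?Pb (p-D) else 0)" for p
    using Suc by simp
  have pre: "(\<Sum>p<Suc (Suc (2*D)). \<bar>pW ?c (Suc l) q p\<bar> * ?H p) = (\<Sum>p<D. \<bar>pW a (Suc l) q p\<bar> * ?Pa p)"
    "(\<Sum>p<Suc (Suc (2*D)). \<bar>pW ?c (Suc l) (q+w) p\<bar> * ?H p) = (\<Sum>p<D. \<bar>pW b (Suc l) q p\<bar> * ?Pb p)"
    if "q < w" for q
    by (rule trans[OF pW_max_params_below(3)[OF below that]]
        trans[OF pW_max_params_below(4)[OF below that]];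
        simp add: IH cong: sum.cong_simp del: path_mat.simps)+
  have "path_mat (2*w) (Suc (Suc (2*D))) ?c (Suc l) i j = ?H i + 3 *
      ((\<Sum>q<w. \<bar>pU ?c (Suc l) i q\<bar> * (\<Sum>p<D. \<bar>pW a (Suc l) q p\<bar> * ?Pa p))
       + (\<Sum>q<w. \<bar>pU ?c (Suc l) i (q+w)\<bar> * (\<Sum>p<D. \<bar>pW b (Suc l) q p\<bar> * ?Pb p)))"
    by (simp only: path_mat.simps sum_lessThan_double)
       (intro arg_cong2[where f="(+)"] arg_cong[where f="(*) 3"] refl sum.cong,
        simp_all only: lessThan_iff pre)
  also have "\<dots> = (if i < D then path_mat w D a (Suc l) i j
      else if i < 2*D then path_mat w D b (Suc l) (i-D) j else 0)"
    using below by (simp add: IH pU_max_params_below cong: sum.cong_simp)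
  finally show ?case .
qed

lemma path_mat_max_params_top:
  assumes w: "0 < w"
  shows "path_mat (2*w) (Suc (Suc (2*D))) (max_params L D w a b) (Suc L) i j =
    (if i < D then path_mat w D a L i j else if i < 2*D then path_mat w D b L (i-D) j
     else if i = 2*D \<or> i = Suc (2*D) then
       3 * ((\<Sum>p<D. \<bar>pu a p\<bar> * path_mat w D a L p j) + (\<Sum>p<D. \<bar>pu b p\<bar> * path_mat w D b L p j))
     else 0)"
proof -
  let ?c = "max_params L D w a b"
  let ?H = "\<lambda>p. path_mat (2*w) (Suc (Suc (2*D))) ?c L p j"
  have H: "?H p = (if p < D then path_mat w D a L p j
      else if p < 2*D then path_mat w D b L (p-D) j else 0)" for p
    by (rule path_mat_max_params) simp
  have out: "(\<Sum>p<Suc (Suc (2*D)). \<bar>pW ?c (Suc L) q p\<bar> * ?H p)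
      = (\<Sum>p<D. \<bar>pu a p\<bar> * path_mat w D a L p j) + (\<Sum>p<D. \<bar>pu b p\<bar> * path_mat w D b L p j)"
    if "q \<in> {0, 1}" for q
    unfolding pW_max_params_top(3)[OF that] by (simp add: H cong: sum.cong_simp del: path_mat.simps)
  show ?thesis
    by (simp only: path_mat.simps(2) sum_pU_max_params_top[OF w, where g=abs] abs_zero abs_one
        out insert_iff simp_thms)
       (simp add: H del: path_mat.simps)
qed

lemma path_norm_max_params:
  assumes w: "0 < w"
  shows "path_norm (2*w) (Suc (Suc (2*D))) (Suc L) (max_params L D w a b)
    = 7/2 * (path_norm w D L a + path_norm w D L b)"
proof -
  let ?Pa = "\<lambda>j. \<Sum>p<D. \<bar>pu a p\<bar> * path_mat w D a L p j"
  let ?Pb = "\<lambda>j. \<Sum>p<D. \<bar>pu b p\<bar> * path_mat w D b L p j"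
  have nonneg: "0 \<le> ?Pa j" "0 \<le> ?Pb j" for j
    by (auto intro!: sum_nonneg mult_nonneg_nonneg path_mat_nonneg)
  have top: "(\<Sum>i<Suc (Suc (2*D)). \<bar>pu (max_params L D w a b) i\<bar>
        * path_mat (2*w) (Suc (Suc (2*D))) (max_params L D w a b) (Suc L) i j)
      = 7/2 * (?Pa j + ?Pb j)" for j
    unfolding sum_lessThan_two_blocks
    by (simp add: pu_max_params path_mat_max_params_top[OF w]
        cong: sum.cong_simp del: path_mat.simps flip: sum_divide_distrib)
  have "path_norm (2*w) (Suc (Suc (2*D))) (Suc L) (max_params L D w a b)
      = (\<Sum>j\<in>UNIV. 7/2 * (?Pa j + ?Pb j))"
    unfolding path_norm_def top using nonneg by (simp del: path_mat.simps)
  also have "\<dots> = 7/2 * ((\<Sum>j\<in>UNIV. ?Pa j) + (\<Sum>j\<in>UNIV. ?Pb j))"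
    by (simp only: sum_distrib_left[symmetric] sum.distrib)
  also have "\<dots> = 7/2 * (path_norm w D L a + path_norm w D L b)"
    unfolding path_norm_def using nonneg by (simp del: path_mat.simps)
  finally show ?thesis .
qed

primrec tree_dim :: "nat \<Rightarrow> nat \<Rightarrow> nat" where
  "tree_dim m 0 = Suc m"
| "tree_dim m (Suc k) = Suc (Suc (2 * tree_dim m k))"

lemma exists_resnet_max_tree:
  fixes \<Theta> :: "nat \<Rightarrow> ('d::finite) resnet_params"
  assumes m: "0 < m" and leaves: "\<And>i. i \<in> {b<..b + 2^k} \<Longrightarrow> units_idle_from m (\<Theta> i)"
  shows "\<exists>\<theta>::'d resnet_params. units_idle_from (2^k*m) \<theta>
     \<and> (\<forall>x. resnet (2^k*m) (tree_dim m k) (Suc k) \<theta> x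
           = Max ((\<lambda>i. resnet m (Suc m) (Suc 0) (\<Theta> i) x) ` {b<..b + 2^k}))
     \<and> path_norm (2^k*m) (tree_dim m k) (Suc k) \<theta>
           \<le> (7/2)^k * (\<Sum>i\<in>{b<..b + 2^k}. path_norm m (Suc m) (Suc 0) (\<Theta> i))"
  using leaves
proof (induction k arbitrary: b)
  case 0
  have "{b<..b + 2^0} = {Suc b}" by auto
  then show ?case using "0.prems"[of "Suc b"] by auto
next
  case (Suc k)
  let ?w = "2^k * m" and ?D = "tree_dim m k"
  let ?F = "\<lambda>i. resnet m (Suc m) (Suc 0) (\<Theta> i)" and ?P = "\<lambda>i. path_norm m (Suc m) (Suc 0) (\<Theta> i)"
  let ?I = "{b<..b + 2^k}" and ?J = "{b + 2^k<..(b + 2^k) + 2^k}"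
  obtain \<theta>\<^sub>a :: "'d resnet_params" where a: "units_idle_from ?w \<theta>\<^sub>a"
      "\<forall>x. resnet ?w ?D (Suc k) \<theta>\<^sub>a x = Max ((\<lambda>i. ?F i x) ` ?I)"
      "path_norm ?w ?D (Suc k) \<theta>\<^sub>a \<le> (7/2)^k * (\<Sum>i\<in>?I. ?P i)"
    using Suc.IH[of b] Suc.prems by (auto simp: greaterThanAtMost_split_power2)
  obtain \<theta>\<^sub>b :: "'d resnet_params" where b: "units_idle_from ?w \<theta>\<^sub>b"
      "\<forall>x. resnet ?w ?D (Suc k) \<theta>\<^sub>b x = Max ((\<lambda>i. ?F i x) ` ?J)"
      "path_norm ?w ?D (Suc k) \<theta>\<^sub>b \<le> (7/2)^k * (\<Sum>i\<in>?J. ?P i)"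
    using Suc.IH[of "b + 2^k"] Suc.prems by (auto simp: greaterThanAtMost_split_power2)
  have w: "0 < ?w" using m by simp
  have w2: "2^Suc k * m = 2 * ?w" by simp
  have disj: "?I \<inter> ?J = {}" by auto
  let ?\<theta> = "max_params (Suc k) ?D ?w \<theta>\<^sub>a \<theta>\<^sub>b"
  have "units_idle_from (2^Suc k * m) ?\<theta>"
    unfolding w2 by (rule units_idle_from_max_params[OF w])
  moreover have "resnet (2^Suc k * m) (tree_dim m (Suc k)) (Suc (Suc k)) ?\<theta> x
      = Max ((\<lambda>i. ?F i x) ` {b<..b + 2^Suc k})" for x
    unfolding w2 tree_dim.simps resnet_max_params[OF w] greaterThanAtMost_split_power2 image_Un
    by (simp add: Max_Un a(2) b(2))
  moreover have "path_norm (2^Suc k * m) (tree_dim m (Suc k)) (Suc (Suc k)) ?\<theta>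
      \<le> (7/2)^Suc k * (\<Sum>i\<in>{b<..b + 2^Suc k}. ?P i)"
  proof -
    have "path_norm (2^Suc k * m) (tree_dim m (Suc k)) (Suc (Suc k)) ?\<theta>
        = 7/2 * (path_norm ?w ?D (Suc k) \<theta>\<^sub>a + path_norm ?w ?D (Suc k) \<theta>\<^sub>b)"
      unfolding w2 tree_dim.simps by (rule path_norm_max_params[OF w])
    also have "\<dots> \<le> 7/2 * ((7/2)^k * (\<Sum>i\<in>?I. ?P i) + (7/2)^k * (\<Sum>i\<in>?J. ?P i))"
      using a(3) b(3) by simp
    also have "\<dots> = (7/2)^Suc k * (\<Sum>i\<in>{b<..b + 2^Suc k}. ?P i)"
      unfolding greaterThanAtMost_split_power2 by (simp add: sum.union_disjoint disj algebra_simps)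
    finally show ?thesis .
  qed
  ultimately show ?case by blast
qed

lemma unif_expect_Max_diff_sq_le:
  fixes f g :: "'i \<Rightarrow> real^'d::finite \<Rightarrow> real"
  assumes S: "compact S" and I: "finite I" "I \<noteq> {}"
    and f: "\<And>i. i \<in> I \<Longrightarrow> continuous_on S (f i)" and g: "\<And>i. i \<in> I \<Longrightarrow> continuous_on S (g i)"
  shows "unif_expect S (\<lambda>s. (Max ((\<lambda>i. f i s) ` I) - Max ((\<lambda>i. g i s) ` I))\<^sup>2)
    \<le> (\<Sum>i\<in>I. unif_expect S (\<lambda>s. (f i s - g i s)\<^sup>2))"
proof -
  note integrable = set_integrable_continuous_on_compact[OF S] continuous_intros
    continuous_on_Max_image[OF I] f g
  have "(LINT s:S|lborel. (Max ((\<lambda>i. f i s) ` I) - Max ((\<lambda>i. g i s) ` I))\<^sup>2)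
      \<le> (LINT s:S|lborel. \<Sum>i\<in>I. (f i s - g i s)\<^sup>2)"
    using Max_image_diff_sq_le[OF I] by (intro set_integral_mono integrable) auto
  also have "\<dots> = (\<Sum>i\<in>I. LINT s:S|lborel. (f i s - g i s)\<^sup>2)"
    by (intro set_integral_sum integrable)
  finally show ?thesis
    unfolding unif_expect_def sum_divide_distrib[symmetric] by (rule divide_right_mono) simp
qed

section \<open>Greedy approximation of Barron functions\<close>

definition neuron :: "real \<times> (real^'d::finite) \<Rightarrow> real^'d \<Rightarrow> real" where
  "neuron \<theta> x = fst \<theta> * relu (snd \<theta> \<bullet> x)"

definition neuron_norm :: "real \<times> (real^'d::finite) \<Rightarrow> real" where
  "neuron_norm \<theta> = \<bar>fst \<theta>\<bar> * l1norm (snd \<theta>)"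

lemma continuous_on_neuron: "continuous_on A (neuron \<theta>)"
  unfolding neuron_def by (intro continuous_intros)

lemma neuron_norm_nonneg: "0 \<le> neuron_norm \<theta>"
  unfolding neuron_norm_def l1norm_def by (auto intro!: sum_nonneg)

lemma relu_inner_le_l1norm:
  assumes "\<forall>i. 0 \<le> x $ i \<and> x $ i \<le> 1"
  shows "relu (w \<bullet> x) \<le> l1norm (w::real^'d::finite)"
proof -
  have "w \<bullet> x = (\<Sum>j\<in>UNIV. w $ j * x $ j)" by (simp add: inner_vec_def)
  also have "\<dots> \<le> (\<Sum>j\<in>UNIV. \<bar>w $ j\<bar>)"
  proof (rule sum_mono)
    fix j
    have "w $ j * x $ j \<le> \<bar>w $ j\<bar> * x $ j" by (rule mult_right_mono) (use assms in auto)
    also have "\<dots> \<le> \<bar>w $ j\<bar>" using assms by (simp add: mult_left_le)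
    finally show "w $ j * x $ j \<le> \<bar>w $ j\<bar>" .
  qed
  finally show ?thesis unfolding relu_def l1norm_def by (auto intro: sum_nonneg)
qed

lemma abs_neuron_le: "\<forall>i. 0 \<le> x $ i \<and> x $ i \<le> 1 \<Longrightarrow> \<bar>neuron \<theta> x\<bar> \<le> neuron_norm \<theta>"
  unfolding neuron_def neuron_norm_def using relu_inner_le_l1norm[of x "snd \<theta>"]
  by (simp add: abs_mult relu_nonneg mult_left_mono)

locale barron_setting =
  fixes S :: "(real^'d::finite) set" and h :: "real^'d \<Rightarrow> real"
    and \<rho> :: "(real \<times> (real^'d)) measure"
  assumes S_compact: "compact S"
    and S_cube: "\<forall>x\<in>S. \<forall>i. 0 \<le> x $ i \<and> x $ i \<le> 1"
    and h_cont: "continuous_on S h"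
    and rho_prob: "prob_space \<rho>"
    and rho_sets: "sets \<rho> = sets borel"
    and rep: "\<And>x. x \<in> S \<Longrightarrow> integrable \<rho> (\<lambda>\<theta>. neuron \<theta> x) \<and> h x = (\<integral>\<theta>. neuron \<theta> x \<partial>\<rho>)"
    and second_moment_integrable: "integrable \<rho> (\<lambda>\<theta>. (neuron_norm \<theta>)\<^sup>2)"
begin

interpretation rho: prob_space \<rho> by (rule rho_prob)

interpretation pair: pair_sigma_finite lborel \<rho>
  by (intro pair_sigma_finite.intro lborel.sigma_finite_measure_axioms
      rho.sigma_finite_measure_axioms)

abbreviation first_moment :: real where
  "first_moment \<equiv> \<integral>\<theta>. neuron_norm \<theta> \<partial>\<rho>"

abbreviation second_moment :: real where
  "second_moment \<equiv> \<integral>\<theta>. (neuron_norm \<theta>)\<^sup>2 \<partial>\<rho>"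

lemma S_borel: "S \<in> sets borel"
  using S_compact by (simp add: compact_imp_closed borel_closed)

lemma set_integrable_S: "continuous_on S f \<Longrightarrow> set_integrable lborel S (f :: _ \<Rightarrow> real)"
  by (rule set_integrable_continuous_on_compact[OF S_compact])

lemma measurable_neuron_norm: "neuron_norm \<in> borel_measurable \<rho>"
proof -
  have "continuous_on UNIV (neuron_norm :: real \<times> (real^'d) \<Rightarrow> real)"
    unfolding neuron_norm_def l1norm_def by (intro continuous_intros)
  then show ?thesis
    using borel_measurable_continuous_onI measurable_cong_sets[OF rho_sets refl] by blast
qed

lemma neuron_norm_integrable: "integrable \<rho> neuron_norm"
  by (rule rho.square_integrable_imp_integrable[OF measurable_neuron_norm second_moment_integrable])

lemma first_moment_le_sqrt: "first_moment \<le> sqrt second_moment"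
proof -
  have "0 \<le> rho.variance neuron_norm" by (rule rho.variance_positive)
  then have "first_moment\<^sup>2 \<le> second_moment"
    by (simp add: rho.variance_eq[OF neuron_norm_integrable second_moment_integrable])
  then show ?thesis by (rule real_le_rsqrt)
qed

lemma abs_le_first_moment:
  assumes x: "x \<in> S"
  shows "\<bar>h x\<bar> \<le> first_moment"
proof -
  have "\<bar>h x\<bar> \<le> (\<integral>\<theta>. \<bar>neuron \<theta> x\<bar> \<partial>\<rho>)"
    using rep[OF x] by simp
  also have "\<dots> \<le> first_moment"
    using rep[OF x] S_cube x
    by (intro integral_mono neuron_norm_integrable abs_neuron_le) auto
  finally show ?thesis .
qed

lemma sq_le_second_moment:
  assumes "x \<in> S"
  shows "(h x)\<^sup>2 \<le> second_moment"
proof -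
  have "\<bar>h x\<bar> \<le> sqrt second_moment"
    using abs_le_first_moment[OF assms] first_moment_le_sqrt by linarith
  then have "(h x)\<^sup>2 \<le> (sqrt second_moment)\<^sup>2"
    by (metis abs_ge_zero power2_abs power_mono)
  also have "\<dots> = second_moment" by simp
  finally show ?thesis .
qed

lemma measurable_neuron_pair:
  "(\<lambda>p. neuron (snd p) (fst p)) \<in> borel_measurable (lborel \<Otimes>\<^sub>M \<rho>)"
  "(\<lambda>p. neuron (fst p) (snd p)) \<in> borel_measurable (\<rho> \<Otimes>\<^sub>M lborel)"
  unfolding neuron_def
  by (rule borel_measurable_continuous_on_pair, simp_all add: rho_sets, intro continuous_intros)+

lemma integrable_neuron_pair:
  assumes c: "continuous_on S c"
  shows "integrable (lborel \<Otimes>\<^sub>M \<rho>) (\<lambda>(x, \<theta>). indicator S x * c x * neuron \<theta> x)"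
    (is "integrable _ (case_prod ?f)")
proof -
  obtain C where C: "\<forall>x\<in>S. \<bar>c x\<bar> \<le> C"
    using compact_imp_bounded[OF compact_continuous_image[OF c S_compact]]
    by (auto simp: bounded_iff)
  have ind: "(\<lambda>x. indicator S x * c x) \<in> borel_measurable lborel"
    using borel_measurable_continuous_on_indicator[OF S_borel c] by simp
  have meas: "case_prod ?f \<in> borel_measurable (lborel \<Otimes>\<^sub>M \<rho>)"
    unfolding split_beta'
    by (rule borel_measurable_times[OF measurable_compose[OF measurable_fst ind]
          measurable_neuron_pair(1)])
  have inner_bound: "(\<integral>\<theta>. norm (?f x \<theta>) \<partial>\<rho>) \<le> indicator S x * (C * first_moment)" for x
  proof (cases "x \<in> S")
    case True
    have "(\<integral>\<theta>. norm (?f x \<theta>) \<partial>\<rho>) = \<bar>c x\<bar> * (\<integral>\<theta>. \<bar>neuron \<theta> x\<bar> \<partial>\<rho>)"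
      using True by (simp add: abs_mult)
    also have "\<dots> \<le> C * first_moment"
    proof (rule mult_mono)
      show "(\<integral>\<theta>. \<bar>neuron \<theta> x\<bar> \<partial>\<rho>) \<le> first_moment"
        using True rep[OF True] S_cube
        by (intro integral_mono neuron_norm_integrable abs_neuron_le) auto
    qed (use C True in \<open>auto intro: order_trans[OF abs_ge_zero]\<close>)
    finally show ?thesis using True by simp
  qed simp
  have "integrable lborel (\<lambda>x. indicator S x * (C * first_moment))"
    using emeasure_compact_finite[OF S_compact] S_borel
    by (intro integrable_mult_left integrable_real_indicator) auto
  then have "integrable lborel (\<lambda>x. \<integral>\<theta>. norm (?f x \<theta>) \<partial>\<rho>)"
    by (rule Bochner_Integration.integrable_bound)
       (use meas inner_bound in \<open>auto intro!: rho.borel_measurable_lebesgue_integral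
          order_trans[OF _ abs_ge_self] simp: split_beta'\<close>)
  then show ?thesis
    by (intro pair.Fubini_integrable[OF meas]) (auto simp: rep split: split_indicator)
qed

lemma set_integral_neuron:
  assumes c: "continuous_on S c"
  shows "integrable \<rho> (\<lambda>\<theta>. LINT x:S|lborel. c x * neuron \<theta> x)"
    and "(\<integral>\<theta>. (LINT x:S|lborel. c x * neuron \<theta> x) \<partial>\<rho>) = (LINT x:S|lborel. c x * h x)"
proof -
  let ?f = "\<lambda>x \<theta>. indicator S x * c x * neuron \<theta> x"
  have eq: "(LINT x:S|lborel. c x * neuron \<theta> x) = (\<integral>x. ?f x \<theta> \<partial>lborel)" for \<theta>
    unfolding set_lebesgue_integral_def by (simp add: mult.assoc)
  note int = integrable_neuron_pair[OF c]
  show "integrable \<rho> (\<lambda>\<theta>. LINT x:S|lborel. c x * neuron \<theta> x)"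
    unfolding eq by (rule pair.integrable_snd[OF int])
  have "(\<integral>\<theta>. (\<integral>x. ?f x \<theta> \<partial>lborel) \<partial>\<rho>) = (\<integral>x. (\<integral>\<theta>. ?f x \<theta> \<partial>\<rho>) \<partial>lborel)"
    by (rule pair.Fubini_integral[OF int])
  also have "\<dots> = (LINT x:S|lborel. c x * h x)"
    unfolding set_lebesgue_integral_def
    by (intro Bochner_Integration.integral_cong) (auto simp: rep split: split_indicator)
  finally show "(\<integral>\<theta>. (LINT x:S|lborel. c x * neuron \<theta> x) \<partial>\<rho>) = (LINT x:S|lborel. c x * h x)"
    unfolding eq .
qed

lemma set_integral_neuron_sq_le:
  "(LINT x:S|lborel. (neuron \<theta> x)\<^sup>2) \<le> measure lborel S * (neuron_norm \<theta>)\<^sup>2"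
proof -
  have "(LINT x:S|lborel. (neuron \<theta> x)\<^sup>2) \<le> (LINT x:S|lborel. (neuron_norm \<theta>)\<^sup>2)"
  proof (rule set_integral_mono)
    fix x assume "x \<in> S"
    then have "\<bar>neuron \<theta> x\<bar> \<le> neuron_norm \<theta>" using S_cube abs_neuron_le by blast
    then show "(neuron \<theta> x)\<^sup>2 \<le> (neuron_norm \<theta>)\<^sup>2"
      by (metis abs_le_square_iff abs_of_nonneg neuron_norm_nonneg)
  qed (intro set_integrable_S continuous_intros continuous_on_neuron)+
  also have "\<dots> = measure lborel S * (neuron_norm \<theta>)\<^sup>2"
    using S_borel emeasure_compact_finite[OF S_compact] by (simp add: set_integral_const)
  finally show ?thesis .
qed

lemma set_integral_neuron_sq_integrable:
  "integrable \<rho> (\<lambda>\<theta>. LINT x:S|lborel. (neuron \<theta> x)\<^sup>2)"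
proof (rule Bochner_Integration.integrable_bound)
  show "integrable \<rho> (\<lambda>\<theta>. measure lborel S * (neuron_norm \<theta>)\<^sup>2)"
    using second_moment_integrable by simp
  have "(\<lambda>p. indicator S (snd p) * (neuron (fst p) (snd p))\<^sup>2) \<in> borel_measurable (\<rho> \<Otimes>\<^sub>M lborel)"
    using S_borel by (intro borel_measurable_times borel_measurable_power measurable_neuron_pair
        measurable_compose[OF measurable_snd borel_measurable_indicator]) simp
  then show "(\<lambda>\<theta>. LINT x:S|lborel. (neuron \<theta> x)\<^sup>2) \<in> borel_measurable \<rho>"
    unfolding set_lebesgue_integral_def
    by (intro lborel.borel_measurable_lebesgue_integral) (simp add: split_beta')
  show "AE \<theta> in \<rho>. norm (LINT x:S|lborel. (neuron \<theta> x)\<^sup>2)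
      \<le> norm (measure lborel S * (neuron_norm \<theta>)\<^sup>2)"
    using set_integral_neuron_sq_le set_integral_nonneg[of S "\<lambda>x. (neuron _ x)\<^sup>2"] by auto
qed

lemma exists_neuron_step:
  assumes c: "continuous_on S c" and \<kappa>: "0 \<le> \<kappa>"
  shows "\<exists>\<theta>. (LINT x:S|lborel. (c x + neuron \<theta> x - h x)\<^sup>2) + \<kappa> * neuron_norm \<theta>
     \<le> (LINT x:S|lborel. (c x)\<^sup>2) + measure lborel S * second_moment + \<kappa> * first_moment"
proof -
  define e where "e x = c x - h x" for x
  have e: "continuous_on S e" unfolding e_def by (intro continuous_intros c h_cont)
  note integrable = set_integrable_S continuous_intros continuous_on_neuron e h_cont c
  define \<Phi> where "\<Phi> \<theta> = (LINT x:S|lborel. (e x)\<^sup>2) + 2 * (LINT x:S|lborel. e x * neuron \<theta> x)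
      + (LINT x:S|lborel. (neuron \<theta> x)\<^sup>2) + \<kappa> * neuron_norm \<theta>" for \<theta>
  have \<Phi>_eq: "(LINT x:S|lborel. (c x + neuron \<theta> x - h x)\<^sup>2) + \<kappa> * neuron_norm \<theta> = \<Phi> \<theta>" for \<theta>
  proof -
    have "(LINT x:S|lborel. (c x + neuron \<theta> x - h x)\<^sup>2)
        = (LINT x:S|lborel. (e x)\<^sup>2 + (2 * (e x * neuron \<theta> x) + (neuron \<theta> x)\<^sup>2))"
      by (simp add: e_def power2_eq_square algebra_simps)
    also have "\<dots> = (LINT x:S|lborel. (e x)\<^sup>2) + (2 * (LINT x:S|lborel. e x * neuron \<theta> x)
        + (LINT x:S|lborel. (neuron \<theta> x)\<^sup>2))"
      by (subst set_integral_add, (intro integrable)+)+ simp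
    finally show ?thesis unfolding \<Phi>_def by simp
  qed
  have "integrable \<rho> \<Phi>"
    unfolding \<Phi>_def using set_integral_neuron(1)[OF e] set_integral_neuron_sq_integrable
      neuron_norm_integrable by simp
  then obtain \<theta> where "\<Phi> \<theta> \<le> (\<integral>\<theta>. \<Phi> \<theta> \<partial>\<rho>)"
    using rho.exists_le_expectation by blast
  also have "(\<integral>\<theta>. \<Phi> \<theta> \<partial>\<rho>) = (LINT x:S|lborel. (e x)\<^sup>2) + 2 * (LINT x:S|lborel. e x * h x)
      + (\<integral>\<theta>. (LINT x:S|lborel. (neuron \<theta> x)\<^sup>2) \<partial>\<rho>) + \<kappa> * first_moment"
    unfolding \<Phi>_def using set_integral_neuron[OF e] set_integral_neuron_sq_integrable
      neuron_norm_integrable by (simp add: rho.prob_space)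
  also have "\<dots> \<le> (LINT x:S|lborel. (c x)\<^sup>2) + measure lborel S * second_moment + \<kappa> * first_moment"
  proof -
    have "(LINT x:S|lborel. (e x)\<^sup>2) + 2 * (LINT x:S|lborel. e x * h x)
        = (LINT x:S|lborel. (e x)\<^sup>2 + 2 * (e x * h x))"
      by (subst set_integral_add, (intro integrable)+) simp
    also have "\<dots> \<le> (LINT x:S|lborel. (c x)\<^sup>2)"
      by (rule set_integral_mono, (intro integrable)+)
         (simp add: e_def power2_eq_square algebra_simps)
    finally have "(LINT x:S|lborel. (e x)\<^sup>2) + 2 * (LINT x:S|lborel. e x * h x)
        \<le> (LINT x:S|lborel. (c x)\<^sup>2)" .
    moreover have "(\<integral>\<theta>. (LINT x:S|lborel. (neuron \<theta> x)\<^sup>2) \<partial>\<rho>)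
        \<le> (\<integral>\<theta>. measure lborel S * (neuron_norm \<theta>)\<^sup>2 \<partial>\<rho>)"
      using set_integral_neuron_sq_integrable second_moment_integrable
      by (intro integral_mono set_integral_neuron_sq_le) auto
    ultimately show ?thesis by simp
  qed
  finally show ?thesis using \<Phi>_eq by metis
qed

lemma exists_neurons:
  assumes \<kappa>: "0 \<le> \<kappa>"
  shows "\<exists>\<Theta>. (LINT x:S|lborel. ((\<Sum>q<t. neuron (\<Theta> q) x) - real t * h x)\<^sup>2)
      + \<kappa> * (\<Sum>q<t. neuron_norm (\<Theta> q))
    \<le> real t * (measure lborel S * second_moment + \<kappa> * first_moment)"
proof (induction t)
  case 0
  show ?case by simp
next
  case (Suc t)
  then obtain \<Theta> where \<Theta>: "(LINT x:S|lborel. ((\<Sum>q<t. neuron (\<Theta> q) x) - real t * h x)\<^sup>2)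
      + \<kappa> * (\<Sum>q<t. neuron_norm (\<Theta> q))
    \<le> real t * (measure lborel S * second_moment + \<kappa> * first_moment)" by blast
  define c where "c x = (\<Sum>q<t. neuron (\<Theta> q) x) - real t * h x" for x
  have "continuous_on S c"
    unfolding c_def by (intro continuous_intros continuous_on_neuron h_cont)
  then obtain \<theta> where \<theta>: "(LINT x:S|lborel. (c x + neuron \<theta> x - h x)\<^sup>2) + \<kappa> * neuron_norm \<theta>
     \<le> (LINT x:S|lborel. (c x)\<^sup>2) + measure lborel S * second_moment + \<kappa> * first_moment"
    using exists_neuron_step \<kappa> by blast
  let ?\<Theta> = "fun_upd \<Theta> t \<theta>"
  have "(\<Sum>q<Suc t. neuron (?\<Theta> q) x) - real (Suc t) * h x = c x + neuron \<theta> x - h x" for x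
    by (simp add: c_def algebra_simps cong: sum.cong_simp)
  moreover have "(\<Sum>q<Suc t. neuron_norm (?\<Theta> q)) = (\<Sum>q<t. neuron_norm (\<Theta> q)) + neuron_norm \<theta>"
    by (simp cong: sum.cong_simp)
  ultimately show ?case
    using \<Theta> \<theta> unfolding c_def by (intro exI[of _ ?\<Theta>]) (simp add: algebra_simps)
qed

text \<open>Penalising the total weight with \<open>\<kappa> = |S| \<surd>M\<close> during the greedy choice bounds the
  error and the path norm of the same \<open>m\<close> neurons at once.\<close>
lemma exists_neuron_average:
  assumes m: "0 < m" and S: "0 < measure lborel S" and M: "0 < second_moment"
  shows "\<exists>\<Theta>. (LINT x:S|lborel. ((\<Sum>q<m. neuron (\<Theta> q) x) / real m - h x)\<^sup>2)
        \<le> 2 * measure lborel S * second_moment / real m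
      \<and> (\<Sum>q<m. neuron_norm (\<Theta> q)) / real m \<le> 2 * sqrt second_moment"
proof -
  define V where "V = measure lborel S"
  define \<kappa> where "\<kappa> = V * sqrt second_moment"
  have \<kappa>: "0 < \<kappa>" unfolding \<kappa>_def V_def using S M by simp
  have "sqrt second_moment * first_moment \<le> sqrt second_moment * sqrt second_moment"
    by (rule mult_left_mono[OF first_moment_le_sqrt]) simp
  then have \<kappa>_first: "\<kappa> * first_moment \<le> V * second_moment"
    unfolding \<kappa>_def V_def using S M by (simp add: mult.assoc)
  obtain \<Theta> where \<Theta>: "(LINT x:S|lborel. ((\<Sum>q<m. neuron (\<Theta> q) x) - real m * h x)\<^sup>2)
      + \<kappa> * (\<Sum>q<m. neuron_norm (\<Theta> q)) \<le> real m * (V * second_moment + \<kappa> * first_moment)"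
    using exists_neurons[of \<kappa> m] \<kappa> unfolding V_def by auto
  let ?X = "LINT x:S|lborel. ((\<Sum>q<m. neuron (\<Theta> q) x) - real m * h x)\<^sup>2"
  let ?Y = "\<Sum>q<m. neuron_norm (\<Theta> q)"
  have "0 \<le> ?X" by (rule set_integral_nonneg) simp
  moreover have "0 \<le> \<kappa> * ?Y" using \<kappa> by (simp add: sum_nonneg neuron_norm_nonneg)
  moreover have "real m * (V * second_moment + \<kappa> * first_moment) \<le> real m * (2 * V * second_moment)"
    using \<kappa>_first by (intro mult_left_mono) auto
  ultimately have X: "?X \<le> real m * (2 * V * second_moment)"
    and Y: "\<kappa> * ?Y \<le> real m * (2 * V * second_moment)"
    using \<Theta> by linarith+
  have "(LINT x:S|lborel. ((\<Sum>q<m. neuron (\<Theta> q) x) / real m - h x)\<^sup>2) = ?X / (real m)\<^sup>2"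
    using m by (simp add: power2_eq_square field_simps flip: set_integral_divide_zero)
  also have "\<dots> \<le> 2 * V * second_moment / real m"
    using X m by (simp add: power2_eq_square field_simps)
  finally have "(LINT x:S|lborel. ((\<Sum>q<m. neuron (\<Theta> q) x) / real m - h x)\<^sup>2)
      \<le> 2 * V * second_moment / real m" .
  moreover have "?Y / real m \<le> 2 * sqrt second_moment"
  proof -
    have "real m * (2 * V * second_moment) = \<kappa> * (real m * (2 * sqrt second_moment))"
      unfolding \<kappa>_def using M by (simp add: algebra_simps)
    then have "?Y \<le> real m * (2 * sqrt second_moment)"
      using Y \<kappa> by (metis mult_le_cancel_left_pos)
    then show ?thesis using m by (simp add: field_simps)
  qed
  ultimately show ?thesis unfolding V_def by blast
qed


lemma exists_shallow_resnet_moment: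
  assumes m: "0 < m" and S: "0 < measure lborel S" and M: "0 < second_moment"
  shows "\<exists>\<theta>::'d resnet_params. units_idle_from m \<theta>
     \<and> unif_expect S (\<lambda>s. (resnet m (Suc m) (Suc 0) \<theta> s - h s)\<^sup>2) \<le> 2 * second_moment / m
     \<and> path_norm m (Suc m) (Suc 0) \<theta> \<le> 6 * sqrt second_moment"
proof -
  obtain \<Theta> where err: "(LINT x:S|lborel. ((\<Sum>q<m. neuron (\<Theta> q) x) / real m - h x)\<^sup>2)
        \<le> 2 * measure lborel S * second_moment / real m"
    and weight: "(\<Sum>q<m. neuron_norm (\<Theta> q)) / real m \<le> 2 * sqrt second_moment"
    using exists_neuron_average[OF m S M] by blast
  let ?\<theta> = "shallow_params m (\<lambda>q. fst (\<Theta> q) / real m) (\<lambda>q. snd (\<Theta> q)) :: 'd resnet_params"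
  have "resnet m (Suc m) (Suc 0) ?\<theta> x = (\<Sum>q<m. neuron (\<Theta> q) x) / real m" for x
    by (simp add: resnet_shallow_params neuron_def sum_divide_distrib)
  then have "unif_expect S (\<lambda>s. (resnet m (Suc m) (Suc 0) ?\<theta> s - h s)\<^sup>2) \<le> 2 * second_moment / m"
    using divide_right_mono[OF err, of "measure lborel S"] S unfolding unif_expect_def by simp
  moreover have "path_norm m (Suc m) (Suc 0) ?\<theta> = 3 * ((\<Sum>q<m. neuron_norm (\<Theta> q)) / real m)"
    by (simp add: path_norm_shallow_params neuron_norm_def sum_divide_distrib)
  moreover have "3 * ((\<Sum>q<m. neuron_norm (\<Theta> q)) / real m) \<le> 6 * sqrt second_moment"
    using weight by simp
  ultimately show ?thesis using units_idle_from_shallow_params by (intro exI[of _ ?\<theta>]) auto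
qed

end

lemma neuron_norm_sq_eq: "(\<lambda>(u, w). u\<^sup>2 * (l1norm w)\<^sup>2) = (\<lambda>\<theta>. (neuron_norm \<theta>)\<^sup>2)"
  by (auto simp: neuron_norm_def power_mult_distrib)

lemma barron_setting_of_rep:
  assumes "compact S" "\<forall>x\<in>S. \<forall>i. 0 \<le> x $ i \<and> x $ i \<le> 1" "continuous_on S h"
    and "barron_rep S h \<rho>" "integrable \<rho> (\<lambda>(u, w). u\<^sup>2 * (l1norm w)\<^sup>2)"
  shows "barron_setting S h \<rho>"
proof -
  have "(\<lambda>(u, w). u * relu (w \<bullet> x)) = (\<lambda>\<theta>. neuron \<theta> x)" for x :: "real^'a"
    by (auto simp: neuron_def)
  then show ?thesis
    using assms unfolding barron_setting_def barron_rep_def neuron_norm_sq_eq by auto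
qed

lemma barron_norm_nonneg: "barron_space S h \<Longrightarrow> 0 \<le> barron_norm S h"
  unfolding barron_space_def barron_norm_def barron_moments_def
  by (auto intro!: cInf_greatest integral_nonneg_AE simp: split_beta)

text \<open>The infimum defining the Barron norm need not be attained, so we take a
  representation whose second moment is within a factor 2 of it.\<close>
lemma exists_barron_setting_near_norm:
  assumes S: "compact S" "\<forall>x\<in>S. \<forall>i. 0 \<le> x $ i \<and> x $ i \<le> 1" and h: "continuous_on S h"
    and hB: "barron_space S h" and x0: "x0 \<in> S" "h x0 \<noteq> 0"
  shows "\<exists>\<rho>. barron_setting S h \<rho> \<and> 0 < (\<integral>\<theta>. (neuron_norm \<theta>)\<^sup>2 \<partial>\<rho>)
     \<and> (\<integral>\<theta>. (neuron_norm \<theta>)\<^sup>2 \<partial>\<rho>) < 2 * (barron_norm S h)\<^sup>2"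
proof -
  let ?B = "barron_moments S h"
  have ne: "?B \<noteq> {}" using hB unfolding barron_space_def .
  have setting: "\<exists>\<rho>. barron_setting S h \<rho> \<and> y = (\<integral>\<theta>. (neuron_norm \<theta>)\<^sup>2 \<partial>\<rho>)" if "y \<in> ?B" for y
    using that barron_setting_of_rep[OF S h] unfolding barron_moments_def neuron_norm_sq_eq by blast
  have lower: "(h x0)\<^sup>2 \<le> y" if "y \<in> ?B" for y
    using setting[OF that] barron_setting.sq_le_second_moment[OF _ x0(1)] by blast
  have h0: "0 < (h x0)\<^sup>2" using x0(2) by simp
  also have "(h x0)\<^sup>2 \<le> Inf ?B" by (rule cInf_greatest[OF ne lower])
  finally have pos: "0 < Inf ?B" .
  then obtain y where y: "y \<in> ?B" "y < 2 * Inf ?B" using cInf_lessD[OF ne, of "2 * Inf ?B"] by auto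
  obtain \<rho> where "barron_setting S h \<rho>" "y = (\<integral>\<theta>. (neuron_norm \<theta>)\<^sup>2 \<partial>\<rho>)"
    using setting[OF y(1)] by blast
  moreover have "(barron_norm S h)\<^sup>2 = Inf ?B" using pos unfolding barron_norm_def by simp
  moreover have "0 < y" using lower[OF y(1)] h0 by linarith
  ultimately show ?thesis using y(2) by auto
qed

lemma exists_shallow_resnet:
  fixes S :: "(real^'d::finite) set"
  assumes S: "compact S" "\<forall>x\<in>S. \<forall>i. 0 \<le> x $ i \<and> x $ i \<le> 1" "0 < measure lborel S"
    and h: "continuous_on S h" "barron_space S h"
    and m: "0 < m"
  shows "\<exists>\<theta>::'d resnet_params. units_idle_from m \<theta>
     \<and> unif_expect S (\<lambda>s. (resnet m (Suc m) (Suc 0) \<theta> s - h s)\<^sup>2) \<le> 16 * (barron_norm S h)\<^sup>2 / m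
     \<and> path_norm m (Suc m) (Suc 0) \<theta> \<le> 12 * barron_norm S h"
proof (cases "\<forall>x\<in>S. h x = 0")
  case True
  let ?\<theta> = "shallow_params m (\<lambda>_. 0) (\<lambda>_. 0) :: 'd resnet_params"
  have "resnet m (Suc m) (Suc 0) ?\<theta> s = 0" for s
    by (simp add: resnet_shallow_params)
  then have "(LINT s:S|lborel. (resnet m (Suc m) (Suc 0) ?\<theta> s - h s)\<^sup>2) = (LINT s:S|lborel. 0)"
    using True S(1) by (intro set_lebesgue_integral_cong) (auto simp: borel_compact)
  then show ?thesis
    using units_idle_from_shallow_params barron_norm_nonneg[OF h(2)]
    by (intro exI[of _ ?\<theta>]) (simp add: unif_expect_def path_norm_shallow_params)
next
  case False
  then obtain x0 where "x0 \<in> S" "h x0 \<noteq> 0" by blast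
  then obtain \<rho> where setting: "barron_setting S h \<rho>" and M: "0 < (\<integral>\<theta>. (neuron_norm \<theta>)\<^sup>2 \<partial>\<rho>)"
    and M_lt: "(\<integral>\<theta>. (neuron_norm \<theta>)\<^sup>2 \<partial>\<rho>) < 2 * (barron_norm S h)\<^sup>2"
    using exists_barron_setting_near_norm[OF S(1,2) h] by blast
  interpret barron_setting S h \<rho> by (rule setting)
  have N: "0 \<le> barron_norm S h" by (rule barron_norm_nonneg[OF h(2)])
  have "2 * second_moment \<le> 16 * (barron_norm S h)\<^sup>2"
    using M_lt zero_le_power2[of "barron_norm S h"] by linarith
  then have "2 * second_moment / m \<le> 16 * (barron_norm S h)\<^sup>2 / m"
    by (rule divide_right_mono) simp
  moreover have "6 * sqrt second_moment \<le> 12 * barron_norm S h"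
  proof -
    have "(2 * barron_norm S h)\<^sup>2 = 4 * (barron_norm S h)\<^sup>2"
      by (simp add: power_mult_distrib)
    then have "second_moment < (2 * barron_norm S h)\<^sup>2"
      using M_lt zero_le_power2[of "barron_norm S h"] by linarith
    then have "sqrt second_moment < sqrt ((2 * barron_norm S h)\<^sup>2)"
      by (rule real_sqrt_less_mono)
    also have "\<dots> = 2 * barron_norm S h"
      using N by (simp only: real_sqrt_abs abs_of_nonneg mult_nonneg_nonneg zero_le_numeral)
    finally show ?thesis by simp
  qed
  moreover obtain \<theta> :: "'d resnet_params" where "units_idle_from m \<theta>"
    "unif_expect S (\<lambda>s. (resnet m (Suc m) (Suc 0) \<theta> s - h s)\<^sup>2) \<le> 2 * second_moment / m"
    "path_norm m (Suc m) (Suc 0) \<theta> \<le> 6 * sqrt second_moment"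
    using exists_shallow_resnet_moment[OF m S(3) M] by blast
  ultimately show ?thesis by (intro exI[of _ \<theta>]) auto
qed

section \<open>Maxima over blocks of rewards\<close>

lemma exists_shallow_resnets:
  fixes S :: "(real^'d::finite) set" and r :: "real^'d \<Rightarrow> nat \<Rightarrow> real"
  assumes S: "compact S" "\<forall>x\<in>S. \<forall>i. 0 \<le> x $ i \<and> x $ i \<le> 1" "0 < measure lborel S"
    and r: "\<And>i. i \<in> I \<Longrightarrow> continuous_on S (\<lambda>s. r s i) \<and> barron_space S (\<lambda>s. r s i)"
    and m: "0 < m"
  shows "\<exists>\<Theta>::nat \<Rightarrow> 'd resnet_params. \<forall>i\<in>I. units_idle_from m (\<Theta> i)
     \<and> unif_expect S (\<lambda>s. (resnet m (Suc m) (Suc 0) (\<Theta> i) s - r s i)\<^sup>2)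
         \<le> 16 * (barron_norm S (\<lambda>s. r s i))\<^sup>2 / m
     \<and> path_norm m (Suc m) (Suc 0) (\<Theta> i) \<le> 12 * barron_norm S (\<lambda>s. r s i)"
  using r by (intro bchoice ballI exists_shallow_resnet[OF S _ _ m]) auto

lemma exists_resnet_block_max:
  fixes S :: "(real^'d::finite) set" and r :: "real^'d \<Rightarrow> nat \<Rightarrow> real"
  assumes S: "compact S" "\<forall>x\<in>S. \<forall>i. 0 \<le> x $ i \<and> x $ i \<le> 1" "0 < measure lborel S"
    and r: "\<And>i. i \<in> {b<..b + 2^k} \<Longrightarrow> continuous_on S (\<lambda>s. r s i) \<and> barron_space S (\<lambda>s. r s i)"
    and m: "0 < m" and w: "2^k * m \<le> w"
  shows "\<exists>D (\<theta>::'d resnet_params). 0 < D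
     \<and> unif_expect S (\<lambda>s. (resnet w D (Suc k) \<theta> s - Max ((\<lambda>i. r s i) ` {b<..b + 2^k}))\<^sup>2)
       \<le> 16 * (\<Sum>i\<in>{b<..b + 2^k}. (barron_norm S (\<lambda>s. r s i))\<^sup>2) / m
     \<and> path_norm w D (Suc k) \<theta> \<le> (7/2)^k * (\<Sum>i\<in>{b<..b + 2^k}. 12 * barron_norm S (\<lambda>s. r s i))"
proof -
  let ?I = "{b<..b + 2^k}"
  from exists_shallow_resnets[OF S r m] obtain \<Theta> :: "nat \<Rightarrow> 'd resnet_params"
    where \<Theta>: "\<forall>i\<in>?I. units_idle_from m (\<Theta> i)
     \<and> unif_expect S (\<lambda>s. (resnet m (Suc m) (Suc 0) (\<Theta> i) s - r s i)\<^sup>2)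
         \<le> 16 * (barron_norm S (\<lambda>s. r s i))\<^sup>2 / m
     \<and> path_norm m (Suc m) (Suc 0) (\<Theta> i) \<le> 12 * barron_norm S (\<lambda>s. r s i)" ..
  let ?F = "\<lambda>i. resnet m (Suc m) (Suc 0) (\<Theta> i)"
  have idle: "\<And>i. i \<in> ?I \<Longrightarrow> units_idle_from m (\<Theta> i)" using \<Theta> by blast
  from exists_resnet_max_tree[where b=b and k=k and \<Theta>=\<Theta>, OF m idle] obtain \<theta> :: "'d resnet_params"
    where \<theta>: "units_idle_from (2^k*m) \<theta>"
      "\<forall>x. resnet (2^k*m) (tree_dim m k) (Suc k) \<theta> x = Max ((\<lambda>i. ?F i x) ` ?I)"
      "path_norm (2^k*m) (tree_dim m k) (Suc k) \<theta>
         \<le> (7/2)^k * (\<Sum>i\<in>?I. path_norm m (Suc m) (Suc 0) (\<Theta> i))"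
    by blast
  have "resnet w (tree_dim m k) (Suc k) \<theta> s = Max ((\<lambda>i. ?F i s) ` ?I)" for s
    using resnet_widen[OF \<theta>(1) w] \<theta>(2) by simp
  then have "unif_expect S (\<lambda>s. (resnet w (tree_dim m k) (Suc k) \<theta> s - Max ((\<lambda>i. r s i) ` ?I))\<^sup>2)
      \<le> (\<Sum>i\<in>?I. unif_expect S (\<lambda>s. (?F i s - r s i)\<^sup>2))"
    using unif_expect_Max_diff_sq_le[OF S(1), of ?I ?F "\<lambda>i s. r s i"] r
    by (simp add: continuous_on_resnet)
  also have "\<dots> \<le> (\<Sum>i\<in>?I. 16 * (barron_norm S (\<lambda>s. r s i))\<^sup>2 / m)"
    using \<Theta> by (intro sum_mono) blast
  also have "\<dots> = 16 * (\<Sum>i\<in>?I. (barron_norm S (\<lambda>s. r s i))\<^sup>2) / m"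
    by (simp add: sum_divide_distrib sum_distrib_left)
  finally have "unif_expect S (\<lambda>s. (resnet w (tree_dim m k) (Suc k) \<theta> s - Max ((\<lambda>i. r s i) ` ?I))\<^sup>2)
      \<le> 16 * (\<Sum>i\<in>?I. (barron_norm S (\<lambda>s. r s i))\<^sup>2) / m" .
  moreover have "path_norm w (tree_dim m k) (Suc k) \<theta>
      \<le> (7/2)^k * (\<Sum>i\<in>?I. 12 * barron_norm S (\<lambda>s. r s i))"
  proof -
    have "(\<Sum>i\<in>?I. path_norm m (Suc m) (Suc 0) (\<Theta> i)) \<le> (\<Sum>i\<in>?I. 12 * barron_norm S (\<lambda>s. r s i))"
      using \<Theta> by (intro sum_mono) blast
    then show ?thesis
      unfolding path_norm_widen[OF \<theta>(1) w] by (intro order_trans[OF \<theta>(3)] mult_left_mono) simp_all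
  qed
  moreover have "0 < tree_dim m k" by (cases k) auto
  ultimately show ?thesis by blast
qed

theorem proposition3p2:
  fixes S :: "(real^'d::finite) set"
    and r :: "real^'d \<Rightarrow> nat \<Rightarrow> real"
    and \<alpha> k j m :: nat
  assumes S_compact: "compact S"
    and S_cube: "\<forall>x\<in>S. \<forall>i. 0 \<le> x $ i \<and> x $ i \<le> 1"
    and S_pos: "emeasure lborel S > 0"
    and r_cont: "\<forall>a\<in>{1..2^\<alpha>}. continuous_on S (\<lambda>s. r s a)"
    and r_barron: "\<forall>a\<in>{1..2^\<alpha>}. barron_space S (\<lambda>s. r s a)"
    and r_bound: "\<forall>a\<in>{1..2^\<alpha>}. \<forall>s\<in>S. \<bar>r s a\<bar> \<le> 1"
    and k_le: "k \<le> \<alpha>"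
    and j_range: "j \<in> {1..2^(\<alpha> - k)}"
    and m_pos: "0 < m"
  shows "\<exists>(D::nat) (\<theta>::'d resnet_params). 0 < D \<and>
     unif_expect S (\<lambda>s. (resnet (6^k * m) D (k+1) \<theta> s
                          - Max {r s i | i. (j-1)*2^k < i \<and> i \<le> j*2^k})\<^sup>2)
       \<le> 5^k * (16 * (\<Sum>i=(j-1)*2^k+1..j*2^k. (barron_norm S (\<lambda>s. r s i))\<^sup>2) / m)
     \<and> path_norm (6^k * m) D (k+1) \<theta>
       \<le> (7/2)^k * (\<Sum>i=(j-1)*2^k+1..j*2^k. 12 * barron_norm S (\<lambda>s. r s i))"
proof -
  define b where "b = (j - 1) * 2^k"
  have top: "j * 2^k = b + 2^k" and "b + 2^k \<le> 2^\<alpha>"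
    using dyadic_block_le[OF k_le j_range] unfolding b_def by auto
  then have block: "i \<in> {1..2^\<alpha>}" if "i \<in> {b<..b + 2^k}" for i using that by auto
  let ?E = "16 * (\<Sum>i\<in>{b<..b + 2^k}. (barron_norm S (\<lambda>s. r s i))\<^sup>2) / m"
  have "0 < measure lborel S"
    using S_pos emeasure_compact_finite[OF S_compact]
    by (simp add: measure_def enn2real_positive_iff)
  then obtain D \<theta> where "0 < D"
    and "unif_expect S (\<lambda>s. (resnet (6^k * m) D (k+1) \<theta> s - Max ((\<lambda>i. r s i) ` {b<..b + 2^k}))\<^sup>2)
       \<le> ?E"
    and "path_norm (6^k * m) D (k+1) \<theta>
       \<le> (7/2)^k * (\<Sum>i\<in>{b<..b + 2^k}. 12 * barron_norm S (\<lambda>s. r s i))"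
    using exists_resnet_block_max[OF S_compact S_cube _ _ m_pos, of b k r "6^k * m"]
      r_cont r_barron block by (auto simp: power_mono)
  moreover have "{r s i | i. (j-1)*2^k < i \<and> i \<le> j*2^k} = (\<lambda>i. r s i) ` {b<..b + 2^k}" for s
    unfolding top b_def[symmetric] by auto
  moreover have "{(j-1)*2^k+1..j*2^k} = {b<..b + 2^k}" unfolding top b_def by auto
  moreover have "?E \<le> 5^k * ?E"
    by (rule order_trans[OF eq_refl mult_right_mono[OF one_le_power[of "5::real" k]]])
       (simp_all add: sum_nonneg)
  ultimately show ?thesis by (intro exI[of _ D] exI[of _ \<theta>]) auto
qed

end
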